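(* Let $(p,l)$ be an irregular pair. For even $m\ge 2$ put $Q(m)=\operatorname{num}\!\left(\frac{B_m}{m}\right)\Big/\operatorname{num}\!\left(\frac{B_m}{m(m-1)}\right)$, and define \[ A(p)=\min_{k\in\mathbb{N}_0}\left\{\, m=l+k(p-1) \;:\; Q(m)=p \,\right\}. \] Then $A(p)=(l-1)p+1$ holds, and this is the smallest possible value, if and only if one of the following cases holds: (1) $l-1$ has no irregular prime factors; (2) every irregular prime divisor $q$ of $l-1$ satisfies $q\nmid B_{(l-1)p+1}/((l-1)p+1)$ (i.e. $q$ does not divide the numerator of this rational number).
   Context: $B_n$ denotes the $n$-th Bernoulli number, defined by $\frac{z}{e^z-1}=\sum_{n\ge0}B_n\frac{z^n}{n!}$. For a rational number $r$, $\operatorname{num}(r)$ is its numerator (in lowest terms). For an odd prime $p$, a pair $(p,l)$ is an irregular pair if $l$ is even, $2\le l\le p-3$ and $p\mid B_l$. An odd prime $p$ is irregular if there is at least one irregular pair $(p,l)$. *)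

theory Defs
  imports "HOL-Computational_Algebra.Computational_Algebra"
begin

definition bernoulli :: "nat \<Rightarrow> rat" where
  "bernoulli n = fact n * fps_nth (fps_X / (fps_exp 1 - 1)) n"

definition num :: "rat \<Rightarrow> int" where
  "num r = fst (quotient_of r)"

definition irregular_pair :: "nat \<Rightarrow> nat \<Rightarrow> bool" where
  "irregular_pair p l \<longleftrightarrow> prime p \<and> odd p \<and> even l \<and> 2 \<le> l \<and> l + 3 \<le> p
     \<and> int p dvd num (bernoulli l)"

definition irregular_prime :: "nat \<Rightarrow> bool" where
  "irregular_prime p \<longleftrightarrow> prime p \<and> odd p \<and> (\<exists>l. irregular_pair p l)"

definition Q :: "nat \<Rightarrow> rat" where
  "Q m = of_int (num (bernoulli m / of_nat m))
         / of_int (num (bernoulli m / (of_nat m * (of_nat m - 1))))"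

definition A_set :: "nat \<Rightarrow> nat \<Rightarrow> nat set" where
  "A_set p l = {m. \<exists>k::nat. m = l + k * (p - 1) \<and> Q m = of_nat p}"

definition A :: "nat \<Rightarrow> nat \<Rightarrow> nat" where
  "A p l = (LEAST m. m \<in> A_set p l)"

end

(*
  Write m0 = (l - 1) p + 1 and N(m) = num (B_m / m).  For N(m) \<noteq> 0 the quotient Q(m) is
  gcd (N(m), m - 1), so Q(m) = p forces p | m - 1; for m = l + k (p - 1) this means
  k \<equiv> l - 1 (mod p), hence m \<ge> m0.  Thus A(p) = m0 exactly when gcd (N(m0), (l - 1) p) = p.
  Kummer's congruence B_m / m \<equiv> B_l / l (mod p), obtained from Faulhaber's formula and the
  power sums S_m = 1^m + ... + (p - 1)^m modulo p^2, gives p | N(m0).  It remains that no prime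
  q | l - 1 divides N(m0): for irregular q this is the hypothesis, for regular q it follows from
  S_m \<equiv> -1 (mod q) when (q - 1) | m0 (von Staudt), and otherwise from Kummer's congruence,
  which moves B_m0 to some B_l' with 2 \<le> l' \<le> q - 3.
*)
theory Submission
  imports Defs "HOL-Number_Theory.Number_Theory"
begin

definition bernoulli_fps :: "rat fps" where
  "bernoulli_fps = fps_X / (fps_exp 1 - 1)"

lemma fps_nth_bernoulli_fps: "bernoulli_fps $ n = bernoulli n / fact n"
  by (simp add: bernoulli_def bernoulli_fps_def)

lemma fps_exp_1_minus_1_nonzero: "fps_exp (1::rat) - 1 \<noteq> 0"
proof
  assume "fps_exp (1::rat) - 1 = 0"
  then have "(fps_exp (1::rat) - 1) $ 1 = 0" by simp
  then show False by simp
qed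

lemma bernoulli_fps_times: "bernoulli_fps * (fps_exp 1 - 1) = fps_X"
  unfolding bernoulli_fps_def
proof (rule fps_times_divide_eq[OF fps_exp_1_minus_1_nonzero])
  have "subdegree (fps_exp (1::rat) - 1) = 1" by (rule subdegreeI) auto
  then show "subdegree (fps_exp (1::rat) - 1) \<le> subdegree (fps_X :: rat fps)" by simp
qed

lemma bernoulli_fps_reflect: "bernoulli_fps oo (- fps_X) = bernoulli_fps + fps_X"
proof -
  let ?B = bernoulli_fps and ?B' = "bernoulli_fps oo - fps_X" and ?E = "fps_exp (1::rat)"
  have "?B' * (fps_exp (-1) - 1) = - fps_X"
    using arg_cong[OF bernoulli_fps_times, of "\<lambda>f. f oo - fps_X"]
    by (simp add: fps_compose_mult_distrib fps_compose_sub_distrib)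
  then have "?B' * (fps_exp (-1) - 1) * ?E = - fps_X * ?E" by simp
  then have "?B' * (fps_exp (-1) * ?E) - ?B' * ?E = - fps_X * ?E"
    by (simp only: mult.assoc left_diff_distrib right_diff_distrib mult_1_left)
  moreover have "fps_exp (-1) * ?E = 1" by (simp flip: fps_exp_add_mult)
  ultimately have "?B' - ?B' * ?E = - fps_X * ?E" by (simp only: mult_1_right)
  then have "?B' * (?E - 1) = fps_X * ?E"
    by (simp add: algebra_simps)
  also have "\<dots> = (?B * ?E) * (?E - 1)"
    using bernoulli_fps_times by (simp add: algebra_simps)
  finally have "?B' = ?B * ?E"
    using fps_exp_1_minus_1_nonzero by (simp only: mult_cancel_right) simp
  also have "\<dots> = ?B * (?E - 1) + ?B" by (simp add: algebra_simps)
  finally show ?thesis by (simp add: bernoulli_fps_times add.commute)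
qed

lemma bernoulli_odd_eq_0:
  assumes "odd n" "n \<noteq> 1"
  shows "bernoulli n = 0"
proof -
  have "(bernoulli_fps oo - fps_X) $ n = (bernoulli_fps + fps_X) $ n"
    by (simp only: bernoulli_fps_reflect)
  with assms show ?thesis
    by (simp add: fps_compose_uminus' fps_X_nth fps_nth_bernoulli_fps)
qed

definition power_sum :: "nat \<Rightarrow> nat \<Rightarrow> int" where
  "power_sum n m = (\<Sum>a<n. int a ^ m)"

lemma sum_fps_exp_times:
  "(\<Sum>a<n. fps_exp (of_nat a :: rat)) * (fps_exp 1 - 1) = fps_exp (of_nat n) - 1"
proof (induction n)
  case (Suc n)
  have "fps_exp (of_nat n :: rat) * fps_exp 1 = fps_exp (of_nat (Suc n))"
    by (simp add: fps_exp_add_mult[symmetric] add.commute)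
  then show ?case using Suc by (simp add: algebra_simps)
qed simp

theorem power_sum_bernoulli:
  "of_int (power_sum n m) =
     (\<Sum>i\<le>m. of_nat (m choose i) * bernoulli i * of_nat n ^ (m + 1 - i) / of_nat (m + 1 - i))"
proof -
  have gf: "fps_X * (\<Sum>a<n. fps_exp (of_nat a :: rat)) = bernoulli_fps * (fps_exp (of_nat n) - 1)"
    using bernoulli_fps_times sum_fps_exp_times[of n] by (metis mult.assoc mult.commute)
  have "of_int (power_sum n m) / fact m = (fps_X * (\<Sum>a<n. fps_exp (of_nat a :: rat))) $ Suc m"
    by (simp add: power_sum_def fps_sum_nth sum_divide_distrib)
  also have "\<dots> = (bernoulli_fps * (fps_exp (of_nat n) - 1)) $ Suc m"
    by (simp only: gf)
  also have "\<dots> = (\<Sum>i\<le>m. bernoulli_fps $ i * (fps_exp (of_nat n) - 1) $ (Suc m - i))"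
    by (simp add: fps_mult_nth sum.atLeast0_atMost_Suc atLeast0AtMost)
  also have "\<dots> = (\<Sum>i\<le>m. bernoulli i / fact i * (of_nat n ^ (Suc m - i) / fact (Suc m - i)))"
    by (intro sum.cong refl) (simp add: fps_nth_bernoulli_fps)
  finally have "of_int (power_sum n m) =
      fact m * (\<Sum>i\<le>m. bernoulli i / fact i * (of_nat n ^ (Suc m - i) / fact (Suc m - i)))"
    by (simp add: divide_eq_eq mult.commute)
  also have "\<dots> = (\<Sum>i\<le>m. of_nat (m choose i) * bernoulli i * of_nat n ^ (m + 1 - i) / of_nat (m + 1 - i))"
    unfolding sum_distrib_left
  proof (intro sum.cong refl)
    fix i assume "i \<in> {..m}"
    then have fact_Suc_diff: "fact (Suc m - i) = (of_nat (Suc m - i) :: rat) * fact (m - i)"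
      and choose: "(of_nat (m choose i) :: rat) = fact m / (fact i * fact (m - i))"
      by (simp_all add: Suc_diff_le binomial_fact)
    show "fact m * (bernoulli i / fact i * (of_nat n ^ (Suc m - i) / fact (Suc m - i))) =
        of_nat (m choose i) * bernoulli i * of_nat n ^ (m + 1 - i) / of_nat (m + 1 - i)"
      by (simp add: fact_Suc_diff choose field_simps)
  qed
  finally show ?thesis .
qed

lemma bernoulli_1: "bernoulli 1 = -1/2"
  and bernoulli_2: "bernoulli 2 = 1/6"
proof -
  have rec: "(\<Sum>i\<le>m. of_nat (m choose i) * bernoulli i / of_nat (m + 1 - i)) = 0 ^ m" for m
    using power_sum_bernoulli[of 1 m] by (simp add: power_sum_def)
  have b0: "bernoulli 0 = 1" using rec[of 0] by simp
  show b1: "bernoulli 1 = -1/2" using rec[of 1] b0 by simp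
  show "bernoulli 2 = 1/6" using rec[of 2] b0 b1 by (simp add: numeral_2_eq_2)
qed

definition p_integral :: "nat \<Rightarrow> rat \<Rightarrow> bool" where
  "p_integral p x \<longleftrightarrow> (\<exists>a b. \<not> int p dvd b \<and> x = of_int a / of_int b)"

lemma p_integral_of_int: "prime p \<Longrightarrow> p_integral p (of_int a)"
  unfolding p_integral_def by (rule exI[of _ a], rule exI[of _ 1]) auto

lemma p_integral_of_nat: "prime p \<Longrightarrow> p_integral p (of_nat a)"
  using p_integral_of_int[of p "int a"] by simp

lemma p_integral_add:
  assumes "prime p" "p_integral p x" "p_integral p y"
  shows "p_integral p (x + y)"
proof -
  obtain a b c d where "\<not> int p dvd b" "x = of_int a / of_int b"
    and "\<not> int p dvd d" "y = of_int c / of_int d"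
    using assms(2,3) by (auto simp: p_integral_def)
  moreover from this have "x + y = of_int (a * d + c * b) / of_int (b * d)"
    by (cases "b = 0 \<or> d = 0") (auto simp: field_simps)
  ultimately show ?thesis
    using assms(1) unfolding p_integral_def by (metis prime_dvd_mult_iff prime_nat_int_transfer)
qed

lemma p_integral_mult:
  assumes "prime p" "p_integral p x" "p_integral p y"
  shows "p_integral p (x * y)"
proof -
  obtain a b c d where "\<not> int p dvd b" "x = of_int a / of_int b"
    and "\<not> int p dvd d" "y = of_int c / of_int d"
    using assms(2,3) by (auto simp: p_integral_def)
  moreover from this have "x * y = of_int (a * c) / of_int (b * d)" by simp
  ultimately show ?thesis
    using assms(1) unfolding p_integral_def by (metis prime_dvd_mult_iff prime_nat_int_transfer)
qed

lemma p_integral_diff: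
  assumes "prime p" "p_integral p x" "p_integral p y"
  shows "p_integral p (x - y)"
  using p_integral_add[OF assms(1,2) p_integral_mult[OF assms(1) p_integral_of_int[OF assms(1)] assms(3)],
      of "-1"]
  by simp

lemma p_integral_sum:
  "prime p \<Longrightarrow> (\<And>i. i \<in> S \<Longrightarrow> p_integral p (f i)) \<Longrightarrow>
    p_integral p (\<Sum>i\<in>S. f i)"
  by (induction S rule: infinite_finite_induct)
    (auto intro: p_integral_add p_integral_of_int[where a = 0, simplified])

lemma p_integral_power: "prime p \<Longrightarrow> p_integral p x \<Longrightarrow> p_integral p (x ^ n)"
  by (induction n) (auto intro: p_integral_mult p_integral_of_int[where a = 1, simplified])

lemma p_integral_divide_of_nat:
  assumes "prime p" "p_integral p x" "\<not> p dvd n"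
  shows "p_integral p (x / of_nat n)"
proof -
  have "p_integral p (of_int 1 / of_int (int n))"
    unfolding p_integral_def using assms(3) by (intro exI[of _ 1] exI[of _ "int n"]) simp
  from p_integral_mult[OF assms(1,2) this] show ?thesis by simp
qed

lemma p_integral_mult_of_nat_iff:
  assumes "prime p" "\<not> p dvd n"
  shows "p_integral p (of_nat n * x) \<longleftrightarrow> p_integral p x"
proof
  assume "p_integral p (of_nat n * x)"
  from p_integral_divide_of_nat[OF assms(1) this assms(2)] assms show "p_integral p x"
    by (cases "n = 0") auto
qed (use assms p_integral_mult p_integral_of_nat in blast)

lemma p_integral_iff_if_diff:
  assumes "prime p" "p_integral p (x - y)"
  shows "p_integral p x \<longleftrightarrow> p_integral p y"
  using p_integral_diff[OF assms(1) _ assms(2), of x] p_integral_add[OF assms(1,2), of y] by auto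

lemma int_dvd_num_iff:
  assumes "prime p"
  shows "int p dvd num x \<longleftrightarrow> p_integral p (x / of_nat p)"
proof -
  obtain a b where q: "quotient_of x = (a, b)" by fastforce
  then have x: "x = of_int a / of_int b" and "b > 0" and "coprime a b" and num: "num x = a"
    by (simp_all add: quotient_of_div quotient_of_denom_pos quotient_of_coprime num_def)
  have p: "prime (int p)" using assms by simp
  show ?thesis
  proof
    assume "int p dvd num x"
    then obtain k where k: "a = int p * k" by (auto simp: num)
    with \<open>coprime a b\<close> p have "\<not> int p dvd b"
      by (metis coprime_common_divisor dvd_triv_left not_prime_unit)
    moreover have "x / of_nat p = of_int k / of_int b" using x k assms by (simp add: prime_gt_0_nat)
    ultimately show "p_integral p (x / of_nat p)" by (auto simp: p_integral_def)
  next
    assume "p_integral p (x / of_nat p)"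
    then obtain c d where "\<not> int p dvd d" "x / of_nat p = of_int c / of_int d"
      by (auto simp: p_integral_def)
    moreover from this have "of_int a / of_int b = (of_int (int p * c) / of_int d :: rat)"
      using x assms \<open>b > 0\<close> by (cases "d = 0") (simp_all add: prime_gt_0_nat field_simps)
    then have "of_int (a * d) = (of_int (int p * c * b) :: rat)"
      using \<open>b > 0\<close> \<open>\<not> int p dvd d\<close> by (cases "d = 0") (auto simp: frac_eq_eq)
    then have "a * d = int p * c * b" by (simp only: of_int_eq_iff)
    ultimately show "int p dvd num x" using p num by (metis dvd_triv_left prime_dvd_mult_iff)
  qed
qed

lemma int_dvd_iff_p_integral:
  "prime p \<Longrightarrow> int p dvd n \<longleftrightarrow> p_integral p (of_int n / of_nat p)"
  using int_dvd_num_iff[of p "of_int n"] by (simp add: num_def)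

lemma int_dvd_num_divide_of_nat_iff:
  assumes "prime p" "\<not> p dvd n"
  shows "int p dvd num (x / of_nat n) \<longleftrightarrow> int p dvd num x"
  using p_integral_mult_of_nat_iff[OF assms, of "x / of_nat n / of_nat p"] assms
  by (cases "n = 0") (auto simp: int_dvd_num_iff)

lemma multiplicity_add_le:
  assumes "prime p" "0 < c" "c < p" "c \<le> e"
  shows "multiplicity p e + c \<le> e"
proof (cases "multiplicity p e = 0")
  case False
  let ?v = "multiplicity p e"
  have "real (1 + ?v * (p - 1)) \<le> (1 + real (p - 1)) ^ ?v"
    using Bernoulli_inequality[of "real (p - 1)" ?v] by simp
  also have "\<dots> = real (p ^ ?v)" using assms(3) by (simp add: of_nat_diff)
  finally have "1 + ?v * (p - 1) \<le> p ^ ?v" by linarith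
  also have "p ^ ?v \<le> e"
    using assms(2,4) by (intro dvd_imp_le multiplicity_dvd) auto
  finally have "1 + ?v * c \<le> e"
    using mult_le_mono2[of c "p - 1" ?v] assms(3) by linarith
  moreover have "?v + c \<le> 1 + ?v * c"
    using False assms(2) by (cases ?v; cases c) auto
  ultimately show ?thesis by linarith
qed (use assms in simp)

lemma p_integral_prime_power_divide:
  assumes "prime p" "0 < c" "c < p" "c \<le> e"
  shows "p_integral p (of_nat p ^ (e - c) / of_nat e)"
proof -
  let ?v = "multiplicity p e"
  obtain r where e: "e = p ^ ?v * r" and r: "\<not> p dvd r"
    by (rule multiplicity_decompose'[of e p]) (use assms not_prime_unit in auto)
  have "e - c = (e - c - ?v) + ?v" using multiplicity_add_le[OF assms] by simp
  then have "(of_nat p ^ (e - c) / of_nat e :: rat) = of_nat p ^ (e - c - ?v) / of_nat r"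
    using assms(1) r by (subst (2) e) (auto simp: power_add prime_gt_0_nat)
  with r show ?thesis
    by (simp add: assms(1) p_integral_divide_of_nat p_integral_power p_integral_of_nat)
qed

lemma power_sum_minus_bernoulli:
  "of_int (power_sum p m) - of_nat p * bernoulli m =
     (\<Sum>i<m. of_nat (m choose i) * bernoulli i * of_nat p ^ (m + 1 - i) / of_nat (m + 1 - i))"
  unfolding power_sum_bernoulli by (simp add: lessThan_Suc_atMost[symmetric] add.commute)

lemma p_integral_power_sum_minus_bernoulli_divide:
  assumes "prime p" "2 < p" "\<And>i. i < m \<Longrightarrow> p_integral p (of_nat p * bernoulli i)"
  shows "p_integral p ((of_int (power_sum p m) - of_nat p * bernoulli m) / of_nat p)"
proof -
  have "(of_int (power_sum p m) - of_nat p * bernoulli m) / of_nat p =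
      (\<Sum>i<m. of_nat (m choose i) * (of_nat p * bernoulli i) *
          (of_nat p ^ (m + 1 - i - 2) / of_nat (m + 1 - i)))"
    unfolding power_sum_minus_bernoulli sum_divide_distrib
  proof (intro sum.cong refl)
    fix i assume "i \<in> {..<m}"
    then have "m + 1 - i = Suc (Suc (m + 1 - i - 2))" by simp
    then have "(of_nat p :: rat) ^ (m + 1 - i) = of_nat p ^ (m + 1 - i - 2) * of_nat p * of_nat p"
      by (metis power_Suc2)
    with assms(1) show "of_nat (m choose i) * bernoulli i * of_nat p ^ (m + 1 - i) / of_nat (m + 1 - i)
        / of_nat p = of_nat (m choose i) * (of_nat p * bernoulli i) *
          (of_nat p ^ (m + 1 - i - 2) / of_nat (m + 1 - i))"
      by (simp add: field_simps prime_gt_0_nat)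
  qed
  also have "p_integral p \<dots>"
  proof (intro p_integral_sum[OF assms(1)])
    fix i assume "i \<in> {..<m}"
    with assms have "p_integral p (of_nat p * bernoulli i)" by simp
    moreover have "p_integral p (of_nat p ^ (m + 1 - i - 2) / of_nat (m + 1 - i))"
      using assms \<open>i \<in> {..<m}\<close> by (intro p_integral_prime_power_divide) auto
    ultimately show "p_integral p (of_nat (m choose i) * (of_nat p * bernoulli i) *
        (of_nat p ^ (m + 1 - i - 2) / of_nat (m + 1 - i)))"
      using assms(1) by (blast intro: p_integral_mult p_integral_of_nat)
  qed
  finally show ?thesis .
qed

lemma p_integral_prime_times_bernoulli:
  assumes "prime p" "2 < p"
  shows "p_integral p (of_nat p * bernoulli m)"
proof (induction m rule: less_induct)
  case (less m)
  let ?R = "(of_int (power_sum p m) - of_nat p * bernoulli m) / of_nat p"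
  have "of_nat p * bernoulli m = of_int (power_sum p m) - of_nat p * ?R"
    using assms(1) by (simp add: prime_gt_0_nat)
  also have "p_integral p \<dots>"
  proof -
    have "p_integral p ?R" using less by (intro p_integral_power_sum_minus_bernoulli_divide assms) auto
    then show ?thesis
      using assms by (intro p_integral_diff p_integral_mult p_integral_of_int p_integral_of_nat)
  qed
  finally show ?case .
qed

lemma p_integral_bernoulli_odd:
  assumes "prime p" "2 < p" "odd n"
  shows "p_integral p (bernoulli n)"
proof (cases "n = 1")
  case True
  have "\<not> p dvd 2" using assms(2) by (auto dest: dvd_imp_le)
  with assms(1) have "p_integral p (of_int (-1) / of_nat 2)"
    by (intro p_integral_divide_of_nat p_integral_of_int)
  then show ?thesis unfolding True bernoulli_1 by simp
qed (use assms bernoulli_odd_eq_0 p_integral_of_int[where a = 0] in simp)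

lemma p_integral_power_sum_minus_bernoulli_divide_square:
  assumes "prime p" "4 < p" "even m" "m \<noteq> 0"
  shows "p_integral p ((of_int (power_sum p m) - of_nat p * bernoulli m) / of_nat p ^ 2)"
proof -
  have p: "(of_nat p :: rat) \<noteq> 0" using assms(1) by simp
  have "(of_int (power_sum p m) - of_nat p * bernoulli m) / of_nat p ^ 2 = (\<Sum>i<m.
      of_nat (m choose i) * bernoulli i * of_nat p ^ (m + 1 - i) / of_nat (m + 1 - i) / of_nat p ^ 2)"
    unfolding power_sum_minus_bernoulli sum_divide_distrib ..
  also have "p_integral p \<dots>"
  proof (intro p_integral_sum[OF assms(1)])
    fix i assume "i \<in> {..<m}"
    then consider "i = m - 1" | "i + 2 \<le> m" by fastforce
    then show "p_integral p (of_nat (m choose i) * bernoulli i * of_nat p ^ (m + 1 - i)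
        / of_nat (m + 1 - i) / of_nat p ^ 2)"
    proof cases
      case 1
      then have "m + 1 - i = 2" and "m choose i = m"
        using assms(4) binomial_symmetric[of 1 m] by auto
      with 1 p have "of_nat (m choose i) * bernoulli i * of_nat p ^ (m + 1 - i) / of_nat (m + 1 - i)
          / of_nat p ^ 2 = of_nat m * bernoulli (m - 1) / of_nat 2"
        by simp
      moreover have "p_integral p (of_nat m * bernoulli (m - 1) / of_nat 2)"
      proof (intro p_integral_divide_of_nat p_integral_mult p_integral_of_nat assms(1))
        show "p_integral p (bernoulli (m - 1))"
          using assms by (intro p_integral_bernoulli_odd) auto
        show "\<not> p dvd 2" using assms(2) by (auto dest: dvd_imp_le)
      qed
      ultimately show ?thesis by (simp only:)
    next
      case 2
      then have "m + 1 - i = (m + 1 - i - 3) + 1 + 2" by simp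
      then have "(of_nat p :: rat) ^ (m + 1 - i) = of_nat p ^ (m + 1 - i - 3) * of_nat p * of_nat p ^ 2"
        by (metis power_add power_one_right)
      then have "of_nat (m choose i) * bernoulli i * of_nat p ^ (m + 1 - i) / of_nat (m + 1 - i)
          / of_nat p ^ 2 = of_nat (m choose i) * (of_nat p * bernoulli i) *
            (of_nat p ^ (m + 1 - i - 3) / of_nat (m + 1 - i))"
        using p by (simp add: field_simps)
      moreover have "p_integral p (of_nat p * bernoulli i)"
        using assms by (intro p_integral_prime_times_bernoulli) auto
      moreover have "p_integral p (of_nat p ^ (m + 1 - i - 3) / of_nat (m + 1 - i))"
        using assms 2 by (intro p_integral_prime_power_divide) auto
      ultimately show ?thesis
        using assms(1) by (metis p_integral_mult p_integral_of_nat)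
    qed
  qed
  finally show ?thesis .
qed

lemma bij_betw_mult_mod:
  fixes b p :: nat
  assumes "coprime b p"
  shows "bij_betw (\<lambda>a. a * b mod p) {..<p} {..<p}"
proof -
  have inj: "inj_on (\<lambda>a. a * b mod p) {..<p}"
  proof
    fix x y assume "x \<in> {..<p}" "y \<in> {..<p}" "x * b mod p = y * b mod p"
    moreover from this have "[x = y] (mod p)"
      using cong_mult_rcancel_nat[OF assms, of x y] by (simp add: cong_def)
    ultimately show "x = y" by (meson cong_less_modulus_unique_nat lessThan_iff)
  qed
  moreover have "(\<lambda>a. a * b mod p) ` {..<p} \<subseteq> {..<p}" by auto
  then have "(\<lambda>a. a * b mod p) ` {..<p} = {..<p}"
    by (intro endo_inj_surj inj) auto
  ultimately show ?thesis by (simp add: bij_betw_def)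
qed

lemma power_sum_mult_cong:
  assumes "coprime b p" "\<And>x y. [x = y] (mod int p) \<Longrightarrow> [x ^ m = y ^ m] (mod M)"
  shows "[int b ^ m * power_sum p m = power_sum p m] (mod M)"
proof -
  have "int b ^ m * power_sum p m = (\<Sum>a<p. (int a * int b) ^ m)"
    by (simp add: power_sum_def power_mult_distrib sum_distrib_left mult.commute)
  also have "[\<dots> = (\<Sum>a<p. int (a * b mod p) ^ m)] (mod M)"
    by (intro cong_sum assms(2)) (simp add: cong_def flip: of_nat_mult of_nat_mod)
  also have "(\<Sum>a<p. int (a * b mod p) ^ m) = power_sum p m"
    unfolding power_sum_def by (rule sum.reindex_bij_betw[OF bij_betw_mult_mod[OF assms(1)]])
  finally show ?thesis .
qed

lemma prime_power_dvd_power_sum: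
  assumes "prime p" "\<not> (p - 1) dvd m"
    and "\<And>x y. [x = y] (mod int p) \<Longrightarrow> [x ^ m = y ^ m] (mod int p ^ k)"
  shows "int p ^ k dvd power_sum p m"
proof -
  obtain b where b: "b \<in> totatives p" "ord p b = p - 1"
    using residue_prime_has_primroot[OF assms(1)] by blast
  then have "coprime b p" by (simp add: totatives_def coprime_commute)
  have "\<not> [b ^ m = 1] (mod p)" using ord_divides[of b m p] b(2) assms(2) by simp
  then have "\<not> [int b ^ m = 1] (mod int p)" by (metis cong_int_iff of_nat_1 of_nat_power)
  then have "\<not> int p dvd int b ^ m - 1" by (simp add: cong_iff_dvd_diff)
  then have "coprime (int p ^ k) (int b ^ m - 1)"
    using assms(1) by (simp add: prime_imp_coprime)
  moreover have "int p ^ k dvd (int b ^ m - 1) * power_sum p m"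
    using power_sum_mult_cong[OF \<open>coprime b p\<close> assms(3)]
    by (simp add: cong_iff_dvd_diff algebra_simps)
  ultimately show ?thesis by (simp add: coprime_dvd_mult_right_iff)
qed

lemma prime_dvd_power_sum:
  "prime p \<Longrightarrow> \<not> (p - 1) dvd m \<Longrightarrow> int p dvd power_sum p m"
  using prime_power_dvd_power_sum[of p m 1] by (simp add: cong_pow)

lemma power_cong_prime_square:
  fixes x y :: int
  assumes "prime p" "[x = y] (mod int p)" "p dvd m"
  shows "[x ^ m = y ^ m] (mod int p ^ 2)"
proof -
  have "[x ^ p = y ^ p] (mod int p ^ 2)"
  proof -
    have "[(\<Sum>i<p. x ^ i * y ^ (p - 1 - i)) = (\<Sum>i<p. y ^ i * y ^ (p - 1 - i))] (mod int p)"
      by (intro cong_sum cong_mult cong_pow assms(2) cong_refl)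
    also have "(\<Sum>i<p. y ^ i * y ^ (p - 1 - i)) = int p * y ^ (p - 1)"
      by (simp flip: power_add)
    finally have "int p dvd (\<Sum>i<p. x ^ i * y ^ (p - 1 - i))"
      by (simp add: cong_dvd_iff)
    moreover have "int p dvd x - y" using assms(2) by (simp add: cong_iff_dvd_diff)
    ultimately have "int p * int p dvd (x - y) * (\<Sum>i<p. x ^ i * y ^ (p - 1 - i))"
      by (rule mult_dvd_mono[rotated])
    also have "(x - y) * (\<Sum>i<p. x ^ i * y ^ (p - 1 - i)) = x ^ p - y ^ p"
      using diff_power_eq_sum[of x "p - 1" y] assms(1) by (simp add: prime_gt_0_nat)
    finally show ?thesis by (simp add: cong_iff_dvd_diff power2_eq_square)
  qed
  then show ?thesis
    using assms(3) by (auto simp: power_mult elim!: dvdE intro: cong_pow)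
qed

lemma prime_square_dvd_power_sum:
  assumes "prime p" "\<not> (p - 1) dvd m" "p dvd m"
  shows "int p ^ 2 dvd power_sum p m"
  using assms by (intro prime_power_dvd_power_sum power_cong_prime_square)

lemma power_sum_cong_minus_one:
  assumes "prime p" "(p - 1) dvd m" "m \<noteq> 0"
  shows "[power_sum p m = -1] (mod int p)"
proof -
  have "[power_sum p m = (\<Sum>a<p. if a = 0 then 0 else 1)] (mod int p)"
    unfolding power_sum_def
  proof (intro cong_sum)
    fix a assume a: "a \<in> {..<p}"
    show "[int a ^ m = (if a = 0 then 0 else 1)] (mod int p)"
    proof (cases "a = 0")
      case False
      with a have "\<not> p dvd a" by (auto dest: dvd_imp_le)
      with assms(1) have "[(a ^ (p - 1)) ^ (m div (p - 1)) = 1 ^ (m div (p - 1))] (mod p)"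
        by (intro cong_pow fermat_theorem)
      with assms(2) have "[a ^ m = 1] (mod p)" by (simp flip: power_mult)
      then have "[int a ^ m = 1] (mod int p)" by (metis cong_int_iff of_nat_1 of_nat_power)
      with False show ?thesis by simp
    qed (use assms(3) in \<open>simp add: zero_power\<close>)
  qed
  also have "(\<Sum>a<p. if a = 0 then 0 else 1 :: int) = int p - 1"
  proof -
    have "{..<p} \<inter> - {0} = {1..<p}" by auto
    then show ?thesis using prime_ge_1_nat[OF assms(1)] by (simp add: sum.If_cases of_nat_diff)
  qed
  also have "[int p - 1 = -1] (mod int p)" by (simp add: cong_iff_dvd_diff)
  finally show ?thesis .
qed

lemma square_dvd_power_sub_linear:
  fixes u :: int
  shows "(u - 1) ^ 2 dvd u ^ k - 1 - int k * (u - 1)"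
proof (induction k)
  case (Suc k)
  have "u ^ Suc k - 1 - int (Suc k) * (u - 1) = u * (u ^ k - 1 - int k * (u - 1)) + int k * (u - 1) ^ 2"
    by (simp add: algebra_simps power2_eq_square)
  with Suc show ?case by simp
qed simp

lemma power_sum_linear_cong:
  assumes "prime p" "0 < l"
  shows "int p ^ 2 dvd
    power_sum p (l + k * (p - 1)) - power_sum p l - int k * (power_sum p (l + (p - 1)) - power_sum p l)"
proof -
  have "power_sum p (l + k * (p - 1)) - power_sum p l - int k * (power_sum p (l + (p - 1)) - power_sum p l)
      = (\<Sum>a<p. int a ^ l * ((int a ^ (p - 1)) ^ k - 1 - int k * (int a ^ (p - 1) - 1)))"
  proof -
    have "int a ^ l * ((int a ^ (p - 1)) ^ k - 1 - int k * (int a ^ (p - 1) - 1)) =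
        int a ^ (l + k * (p - 1)) - int a ^ l - int k * (int a ^ (l + (p - 1)) - int a ^ l)" for a
    proof -
      have "int a ^ (l + k * (p - 1)) = int a ^ l * (int a ^ (p - 1)) ^ k"
        by (simp only: power_add power_mult[symmetric] mult.commute[of k "p - 1"])
      moreover have "int a ^ (l + (p - 1)) = int a ^ l * int a ^ (p - 1)"
        by (simp only: power_add)
      ultimately show ?thesis by (simp add: algebra_simps)
    qed
    then show ?thesis
      by (simp add: power_sum_def sum_subtractf flip: sum_distrib_left)
  qed
  also have "int p ^ 2 dvd \<dots>"
  proof (rule dvd_sum)
    fix a assume "a \<in> {..<p}"
    show "int p ^ 2 dvd int a ^ l * ((int a ^ (p - 1)) ^ k - 1 - int k * (int a ^ (p - 1) - 1))"
    proof (cases "a = 0")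
      case False
      with \<open>a \<in> {..<p}\<close> have "\<not> p dvd a" by (auto dest: dvd_imp_le)
      with assms(1) have "[a ^ (p - 1) = 1] (mod p)" by (rule fermat_theorem)
      then have "[int a ^ (p - 1) = 1] (mod int p)" by (metis cong_int_iff of_nat_1 of_nat_power)
      then have "int p ^ 2 dvd (int a ^ (p - 1) - 1) ^ 2"
        by (simp add: cong_iff_dvd_diff dvd_power_same)
      then show ?thesis
        by (intro dvd_mult dvd_trans[OF _ square_dvd_power_sub_linear])
    qed (use assms(2) in \<open>simp add: zero_power\<close>)
  qed
  finally show ?thesis .
qed

lemma power_sum_kummer:
  assumes "prime p" "\<not> (p - 1) dvd l"
  shows "int p ^ 2 dvd int l * power_sum p (l + k * (p - 1)) - int (l + k * (p - 1)) * power_sum p l"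
proof -
  let ?S = "power_sum p" and ?D = "power_sum p (l + (p - 1)) - power_sum p l"
  \<comment> \<open>S is linear in k modulo p^2; the instance k = l, where S (l p) \<equiv> 0, pins down ?D.\<close>
  have "0 < l" using assms(2) by (rule contrapos_np) simp
  have "coprime (p - 1) p" using prime_gt_0_nat[OF assms(1)] by (rule coprime_diff_one_left_nat)
  then have "\<not> (p - 1) dvd l * p" using assms(2) by (simp add: coprime_dvd_mult_left_iff)
  moreover have "l + l * (p - 1) = l * p" using prime_gt_0_nat[OF assms(1)] by (simp add: algebra_simps)
  ultimately have S_lp: "int p ^ 2 dvd ?S (l + l * (p - 1))"
    using assms(1) by (simp add: prime_square_dvd_power_sum)
  have linear_l: "int p ^ 2 dvd ?S (l + l * (p - 1)) - ?S l - int l * ?D"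
    using power_sum_linear_cong[OF assms(1) \<open>0 < l\<close>] .
  have "?S l + int l * ?D = ?S (l + l * (p - 1)) - (?S (l + l * (p - 1)) - ?S l - int l * ?D)"
    by simp
  then have D: "int p ^ 2 dvd ?S l + int l * ?D"
    by (simp only: dvd_diff[OF S_lp linear_l])
  have linear_k: "int p ^ 2 dvd ?S (l + k * (p - 1)) - ?S l - int k * ?D"
    using power_sum_linear_cong[OF assms(1) \<open>0 < l\<close>] .
  have S_l: "int p ^ 2 dvd int k * int p * ?S l"
    using prime_dvd_power_sum[OF assms] by (simp add: power2_eq_square mult_dvd_mono)
  have "int (p - 1) = int p - 1" using prime_ge_1_nat[OF assms(1)] by (simp add: of_nat_diff)
  then have m: "int (l + k * (p - 1)) = int l + int k * (int p - 1)" by simp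
  have "int l * ?S (l + k * (p - 1)) - int (l + k * (p - 1)) * ?S l =
      int l * (?S (l + k * (p - 1)) - ?S l - int k * ?D) + int k * (?S l + int l * ?D)
      - int k * int p * ?S l"
    unfolding m by (simp add: algebra_simps)
  then show ?thesis
    by (simp only: dvd_diff[OF dvd_add[OF dvd_mult[OF linear_k] dvd_mult[OF D]] S_l])
qed

theorem kummer_congruence:
  fixes p l k :: nat
  assumes "prime p" "even l" "\<not> (p - 1) dvd l"
  defines "m \<equiv> l + k * (p - 1)"
  shows "p_integral p ((of_nat l * bernoulli m - of_nat m * bernoulli l) / of_nat p)"
proof -
  have "p \<noteq> 2" "p \<noteq> 3" using assms(2,3) by auto
  moreover have "2 \<le> p" using assms(1) by (rule prime_ge_2_nat)
  ultimately have "odd p" "4 < p" using assms(1) prime_odd_nat[of p] by presburger+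
  have "l \<noteq> 0" using assms(3) by (metis dvd_0_right)
  have "even m" using assms(2) \<open>odd p\<close> by (simp add: m_def)
  \<comment> \<open>B_n = S_n / p - p X_n with X_n p-integral reduces everything to power_sum_kummer\<close>
  define X where "X n = (of_int (power_sum p n) - of_nat p * bernoulli n) / of_nat p ^ 2" for n
  have X: "p_integral p (X m)" "p_integral p (X l)"
    unfolding X_def using assms(1,2) \<open>4 < p\<close> \<open>even m\<close> \<open>l \<noteq> 0\<close>
    by (auto simp: m_def intro: p_integral_power_sum_minus_bernoulli_divide_square)
  obtain t where "int l * power_sum p m - int m * power_sum p l = int p ^ 2 * t"
    using power_sum_kummer[OF assms(1,3), of k] unfolding m_def by blast
  then have "(of_int (int l * power_sum p m - int m * power_sum p l) :: rat) = of_int (int p ^ 2 * t)"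
    by (simp only:)
  then have t: "of_int t = (of_nat l * of_int (power_sum p m) - of_nat m * of_int (power_sum p l))
      / (of_nat p ^ 2 :: rat)"
    using assms(1) by (simp add: field_simps)
  have "(of_nat l * bernoulli m - of_nat m * bernoulli l) / of_nat p =
      of_int t - (of_nat l * X m - of_nat m * X l)"
    using assms(1) unfolding t X_def by (simp add: field_simps power2_eq_square)
  also have "p_integral p \<dots>"
    using X assms(1) by (intro p_integral_diff p_integral_mult p_integral_of_int p_integral_of_nat)
  finally show ?thesis .
qed

corollary kummer_dvd_num_iff:
  fixes p l k :: nat
  assumes "prime p" "even l" "\<not> (p - 1) dvd l" "\<not> p dvd l"
  defines "m \<equiv> l + k * (p - 1)"
  assumes "\<not> p dvd m"
  shows "int p dvd num (bernoulli m) \<longleftrightarrow> int p dvd num (bernoulli l)"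
proof -
  have K: "p_integral p (of_nat l * (bernoulli m / of_nat p) - of_nat m * (bernoulli l / of_nat p))"
    using kummer_congruence[OF assms(1-3), of k] by (simp add: m_def diff_divide_distrib)
  have "int p dvd num (bernoulli m) \<longleftrightarrow> p_integral p (of_nat l * (bernoulli m / of_nat p))"
    using p_integral_mult_of_nat_iff[OF assms(1,4), of "bernoulli m / of_nat p"] assms(1)
    by (simp add: int_dvd_num_iff)
  also have "\<dots> \<longleftrightarrow> p_integral p (of_nat m * (bernoulli l / of_nat p))"
    using K assms(1) by (rule p_integral_iff_if_diff[rotated])
  also have "\<dots> \<longleftrightarrow> int p dvd num (bernoulli l)"
    using p_integral_mult_of_nat_iff[OF assms(1,6), of "bernoulli l / of_nat p"] assms(1)
    by (simp add: int_dvd_num_iff)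
  finally show ?thesis .
qed

lemma not_dvd_num_bernoulli_if_sub_one_dvd:
  assumes "prime p" "2 < p" "(p - 1) dvd m" "m \<noteq> 0"
  shows "\<not> int p dvd num (bernoulli m)"
proof
  assume "int p dvd num (bernoulli m)"
  then have "p_integral p (bernoulli m / of_nat p)" using assms(1) by (simp add: int_dvd_num_iff)
  then have "p_integral p (of_nat p * (bernoulli m / of_nat p))"
    using assms(1) by (intro p_integral_mult p_integral_of_nat)
  moreover have "p_integral p ((of_int (power_sum p m) - of_nat p * bernoulli m) / of_nat p)"
    using assms(1,2) by (intro p_integral_power_sum_minus_bernoulli_divide p_integral_prime_times_bernoulli)
  ultimately have "p_integral p ((of_int (power_sum p m) - of_nat p * bernoulli m) / of_nat p
      + of_nat p * (bernoulli m / of_nat p))"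
    using assms(1) by (blast intro: p_integral_add)
  then have "int p dvd power_sum p m"
    using assms(1) by (simp add: int_dvd_iff_p_integral diff_divide_distrib prime_gt_0_nat)
  moreover have "[power_sum p m = -1] (mod int p)"
    using assms(1,3,4) by (rule power_sum_cong_minus_one)
  ultimately have "int p dvd 1"
    using cong_dvd_iff by fastforce
  with assms(1) show False by simp
qed

lemma regular_prime_not_dvd_num_bernoulli:
  assumes "prime q" "odd q" "\<not> irregular_prime q" "even m" "m \<noteq> 0" "\<not> q dvd m"
  shows "\<not> int q dvd num (bernoulli m)"
proof (cases "(q - 1) dvd m")
  case True
  have "2 < q" using assms(1,2) prime_ge_2_nat[of q] by (cases "q = 2") auto
  with assms(1,5) True show ?thesis by (intro not_dvd_num_bernoulli_if_sub_one_dvd)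
next
  case False
  define l where "l = m mod (q - 1)"
  have m: "m = l + (m div (q - 1)) * (q - 1)" unfolding l_def by (rule mod_div_mult_eq[symmetric])
  have "even (l + m div (q - 1) * (q - 1))" using assms(4) by (simp only: m[symmetric])
  then have "even l" using assms(2) by simp
  have "l \<noteq> 0" using False by (simp add: l_def mod_eq_0_iff_dvd)
  have "l < q - 1" using prime_gt_1_nat[OF assms(1)] by (simp add: l_def)
  moreover have "l \<noteq> q - 2" using \<open>even l\<close> assms(2) prime_gt_1_nat[OF assms(1)] by auto
  ultimately have "2 \<le> l" "l + 3 \<le> q"
    using \<open>even l\<close> \<open>l \<noteq> 0\<close> by (auto elim!: evenE)
  have "\<not> (q - 1) dvd l" "\<not> q dvd l"
    using \<open>l \<noteq> 0\<close> \<open>l < q - 1\<close> by (auto dest: dvd_imp_le)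
  with assms \<open>even l\<close> have "int q dvd num (bernoulli m) \<longleftrightarrow> int q dvd num (bernoulli l)"
    using kummer_dvd_num_iff[of q l "m div (q - 1)", folded m] by blast
  moreover have "\<not> irregular_pair q l" using assms(1-3) by (auto simp: irregular_prime_def)
  ultimately show ?thesis
    using assms(1,2) \<open>even l\<close> \<open>2 \<le> l\<close> \<open>l + 3 \<le> q\<close> by (simp add: irregular_pair_def)
qed

lemma num_divide_of_nat:
  assumes "0 < n"
  shows "num (x / of_nat n) = num x div gcd (num x) (int n)"
proof -
  obtain a b where q: "quotient_of x = (a, b)" by fastforce
  then have "b > 0" "coprime a b" "x = of_int a / of_int b"
    by (simp_all add: quotient_of_denom_pos quotient_of_coprime quotient_of_div)
  then have "quotient_of (x / of_nat n) = Rat.normalize (a, b * int n)"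
    using assms by (simp add: Fract_of_int_quotient flip: quotient_of_Fract)
  then have "num (x / of_nat n) = a div gcd a (b * int n)"
    using \<open>b > 0\<close> assms by (simp add: num_def Rat.normalize_def Let_def)
  also have "gcd a (b * int n) = gcd a (int n)"
    using \<open>coprime a b\<close> by (rule gcd_mult_right_left_cancel)
  finally show ?thesis by (simp add: num_def q)
qed

lemma Q_eq_of_nat_iff:
  assumes "2 \<le> m" "0 < n"
  defines "N \<equiv> num (bernoulli m / of_nat m)"
  shows "Q m = of_nat n \<longleftrightarrow> N \<noteq> 0 \<and> gcd N (int (m - 1)) = int n"
proof -
  let ?g = "gcd N (int (m - 1))"
  have "bernoulli m / (of_nat m * (of_nat m - 1)) = bernoulli m / of_nat m / of_nat (m - 1)"
    using assms(1) by (simp add: of_nat_diff)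
  moreover have "num (bernoulli m / of_nat m / of_nat (m - 1)) = N div ?g"
    unfolding N_def using assms(1) by (intro num_divide_of_nat) simp
  ultimately have Q: "Q m = of_int N / of_int (N div ?g)"
    by (simp only: Q_def N_def)
  show ?thesis
  proof (cases "N = 0")
    case False
    obtain c where c: "?g * c = N" by (metis dvdE gcd_dvd1)
    with False have "?g \<noteq> 0" "c \<noteq> 0" by auto
    then have "N div ?g = c" using c by (metis nonzero_mult_div_cancel_left)
    with c \<open>c \<noteq> 0\<close> have "Q m = of_int ?g" unfolding Q by (metis of_int_mult of_int_eq_0_iff
        nonzero_mult_div_cancel_right)
    moreover have "(of_int ?g :: rat) = of_nat n \<longleftrightarrow> ?g = int n"
      by (metis of_int_eq_iff of_int_of_nat_eq)
    ultimately show ?thesis using False by simp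
  qed (use assms(2) Q in simp)
qed

lemma diff_one_mult_add_one:
  fixes l p :: nat
  assumes "1 \<le> l" "1 \<le> p"
  shows "(l - 1) * p + 1 = l + (l - 1) * (p - 1)"
  using assms by (cases l; cases p) (auto simp: algebra_simps)

lemma A_set_lower_bound:
  assumes "irregular_pair p l" "m \<in> A_set p l"
  shows "(l - 1) * p + 1 \<le> m"
proof -
  have p: "prime p" "2 \<le> l" "l + 3 \<le> p" using assms(1) by (auto simp: irregular_pair_def)
  obtain k where m: "m = l + k * (p - 1)" and "Q m = of_nat p"
    using assms(2) by (auto simp: A_set_def)
  then have "gcd (num (bernoulli m / of_nat m)) (int (m - 1)) = int p"
    using p Q_eq_of_nat_iff[of m p] by (simp add: prime_gt_0_nat)
  then have "int p dvd int (m - 1)" by (metis gcd_dvd2)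
  then have "p dvd m - 1" by simp
  show ?thesis
  proof (cases "k < l - 1")
    case True
    then have "m - 1 = (l - 1 - k) + k * p" using p m by (cases p) (auto simp: algebra_simps)
    with \<open>p dvd m - 1\<close> have "p dvd l - 1 - k" by (simp add: dvd_add_left_iff)
    moreover have "0 < l - 1 - k" "l - 1 - k < p" using True p by auto
    ultimately show ?thesis by (auto dest: dvd_imp_le)
  next
    case False
    then have "(l - 1) * (p - 1) \<le> k * (p - 1)" by simp
    with m p diff_one_mult_add_one[of l p] show ?thesis by simp
  qed
qed

lemma irregular_pair_dvd_num_bernoulli:
  assumes "irregular_pair p l"
  shows "int p dvd num (bernoulli ((l - 1) * p + 1) / of_nat ((l - 1) * p + 1))"
proof -
  have p: "prime p" "even l" "2 \<le> l" "l + 3 \<le> p" "int p dvd num (bernoulli l)"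
    using assms by (auto simp: irregular_pair_def)
  have ndvd: "\<not> p dvd (l - 1) * p + 1"
  proof
    assume "p dvd (l - 1) * p + 1"
    then have "p dvd 1" by (metis dvd_add_right_iff dvd_triv_right)
    with p(1) show False by simp
  qed
  moreover have "\<not> (p - 1) dvd l" "\<not> p dvd l" using p by (auto dest: dvd_imp_le)
  moreover have m: "(l - 1) * p + 1 = l + (l - 1) * (p - 1)"
    using p by (intro diff_one_mult_add_one) auto
  ultimately have "int p dvd num (bernoulli ((l - 1) * p + 1))"
    using kummer_dvd_num_iff[of p l "l - 1", folded m] p by blast
  then show ?thesis using int_dvd_num_divide_of_nat_iff[OF p(1) ndvd] by blast
qed

lemma coprime_if_no_common_prime_divisor:
  fixes N :: int and n :: nat
  assumes "\<And>q. prime q \<Longrightarrow> q dvd n \<Longrightarrow> \<not> int q dvd N"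
  shows "coprime N (int n)"
proof (rule coprimeI, rule ccontr)
  fix c assume "c dvd N" "c dvd int n" "\<not> is_unit c"
  then obtain r where "prime r" "r dvd c" using prime_factor_int[of c] by auto
  then have "prime (nat r)" "int (nat r) dvd c" by (auto simp: prime_ge_0_int)
  with \<open>c dvd N\<close> \<open>c dvd int n\<close> have "int (nat r) dvd N" "nat r dvd n"
    using dvd_trans int_dvd_int_iff by blast+
  with assms \<open>prime (nat r)\<close> show False by blast
qed

lemma num_bernoulli_2: "num (bernoulli 2) = 1"
proof -
  have "bernoulli 2 = Rat.Fract 1 6" by (simp add: bernoulli_2 Fract_of_int_quotient)
  then show ?thesis by (simp add: num_def quotient_of_Fract Rat.normalize_def)
qed

lemma irregular_pair_index_gt_2:
  assumes "irregular_pair p l"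
  shows "2 < l"
proof -
  have "l \<noteq> 2"
  proof
    assume "l = 2"
    with assms have "int p dvd 1" by (simp add: irregular_pair_def num_bernoulli_2)
    with assms show False by (simp add: irregular_pair_def)
  qed
  with assms show ?thesis by (simp add: irregular_pair_def)
qed

lemma A_eq_iff:
  assumes "irregular_pair p l"
  shows "A_set p l \<noteq> {} \<and> A p l = (l - 1) * p + 1 \<longleftrightarrow> Q ((l - 1) * p + 1) = of_nat p"
proof
  assume "A_set p l \<noteq> {} \<and> A p l = (l - 1) * p + 1"
  then have "A p l \<in> A_set p l" unfolding A_def by (metis LeastI ex_in_conv)
  with \<open>A_set p l \<noteq> {} \<and> A p l = (l - 1) * p + 1\<close> show "Q ((l - 1) * p + 1) = of_nat p"
    by (simp add: A_set_def)
next
  assume "Q ((l - 1) * p + 1) = of_nat p"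
  moreover have "(l - 1) * p + 1 = l + (l - 1) * (p - 1)"
    using assms by (intro diff_one_mult_add_one) (auto simp: irregular_pair_def)
  ultimately have "(l - 1) * p + 1 \<in> A_set p l" unfolding A_set_def by auto
  moreover from this have "A p l = (l - 1) * p + 1"
    unfolding A_def using A_set_lower_bound[OF assms] by (intro Least_equality) auto
  ultimately show "A_set p l \<noteq> {} \<and> A p l = (l - 1) * p + 1" by auto
qed

lemma Q_eq_iff_no_prime_divisor:
  assumes "irregular_pair p l"
  defines "N \<equiv> num (bernoulli ((l - 1) * p + 1) / of_nat ((l - 1) * p + 1))"
  shows "Q ((l - 1) * p + 1) = of_nat p \<longleftrightarrow>
    (\<forall>q. prime q \<and> q dvd (l - 1) \<longrightarrow> \<not> int q dvd N)"
proof -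
  have p: "prime p" "2 < l" "l + 3 \<le> p"
    using assms(1) irregular_pair_index_gt_2 by (auto simp: irregular_pair_def)
  have "Q ((l - 1) * p + 1) = of_nat p \<longleftrightarrow> N \<noteq> 0 \<and> gcd N (int (l - 1) * int p) = int p"
    using p Q_eq_of_nat_iff[of "(l - 1) * p + 1" p] by (simp add: N_def prime_gt_0_nat)
  also have "\<dots> \<longleftrightarrow> (\<forall>q. prime q \<and> q dvd (l - 1) \<longrightarrow> \<not> int q dvd N)"
  proof (intro iffI allI impI notI)
    fix q assume "N \<noteq> 0 \<and> gcd N (int (l - 1) * int p) = int p"
      and q: "prime q \<and> q dvd l - 1" "int q dvd N"
    then have "int q dvd int p" by (metis dvd_mult2 gcd_greatest of_nat_dvd_iff)
    with q(1) p(1) have "q = p" by (simp add: primes_dvd_imp_eq)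
    with q(1) p show False by (auto dest: dvd_imp_le)
  next
    assume no_div: "\<forall>q. prime q \<and> q dvd (l - 1) \<longrightarrow> \<not> int q dvd N"
    have "l - 1 \<noteq> 1" using p(2) by simp
    then obtain q where "prime q" "q dvd l - 1" using prime_factor_nat by blast
    with no_div have "N \<noteq> 0" by auto
    have "coprime N (int (l - 1))" using no_div by (intro coprime_if_no_common_prime_divisor) auto
    then have "gcd N (int (l - 1) * int p) = gcd N (int p)" by (rule gcd_mult_right_left_cancel)
    also have "\<dots> = int p"
      using irregular_pair_dvd_num_bernoulli[OF assms(1)] by (simp add: N_def)
    finally show "N \<noteq> 0 \<and> gcd N (int (l - 1) * int p) = int p" using \<open>N \<noteq> 0\<close> by simp
  qed
  finally show ?thesis .
qed

lemma regular_prime_divisor_not_dvd: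
  assumes "irregular_pair p l" "prime q" "q dvd l - 1" "\<not> irregular_prime q"
  shows "\<not> int q dvd num (bernoulli ((l - 1) * p + 1) / of_nat ((l - 1) * p + 1))"
proof -
  have p: "prime p" "even l" "2 \<le> l" "l + 3 \<le> p" using assms(1) by (auto simp: irregular_pair_def)
  then have "odd (l - 1)" by simp
  with assms(3) have "odd q" by (meson dvd_trans)
  have "odd p" using p by (intro prime_odd_nat) auto
  with \<open>odd (l - 1)\<close> have "even ((l - 1) * p + 1)" by simp
  have ndvd: "\<not> q dvd (l - 1) * p + 1"
  proof
    assume "q dvd (l - 1) * p + 1"
    with assms(3) have "q dvd 1" by (metis dvd_add_right_iff dvd_mult2)
    with assms(2) show False by simp
  qed
  with assms(2,4) \<open>odd q\<close> \<open>even ((l - 1) * p + 1)\<close>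
  have "\<not> int q dvd num (bernoulli ((l - 1) * p + 1))"
    by (intro regular_prime_not_dvd_num_bernoulli) auto
  then show ?thesis using int_dvd_num_divide_of_nat_iff[OF assms(2) ndvd] by blast
qed

theorem theorem2p1:
  fixes p l :: nat
  assumes "irregular_pair p l"
  shows "(\<forall>m \<in> A_set p l. (l - 1) * p + 1 \<le> m) \<and>
         ((A_set p l \<noteq> {} \<and> A p l = (l - 1) * p + 1) \<longleftrightarrow>
            ((\<forall>q. prime q \<and> q dvd (l - 1) \<longrightarrow> \<not> irregular_prime q) \<or>
             (\<forall>q. prime q \<and> q dvd (l - 1) \<and> irregular_prime q \<longrightarrow>
                \<not> int q dvd num (bernoulli ((l - 1) * p + 1) / of_nat ((l - 1) * p + 1)))))"
proof -
  let ?N = "num (bernoulli ((l - 1) * p + 1) / of_nat ((l - 1) * p + 1))"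
  have "A_set p l \<noteq> {} \<and> A p l = (l - 1) * p + 1 \<longleftrightarrow>
      (\<forall>q. prime q \<and> q dvd (l - 1) \<longrightarrow> \<not> int q dvd ?N)"
    using A_eq_iff[OF assms] Q_eq_iff_no_prime_divisor[OF assms] by simp
  also have "\<dots> \<longleftrightarrow> (\<forall>q. prime q \<and> q dvd (l - 1) \<longrightarrow> \<not> irregular_prime q) \<or>
      (\<forall>q. prime q \<and> q dvd (l - 1) \<and> irregular_prime q \<longrightarrow> \<not> int q dvd ?N)"
    using regular_prime_divisor_not_dvd[OF assms] by blast
  finally show ?thesis using A_set_lower_bound[OF assms] by blast
qed

end
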